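(* Let $a\in\mathbb{F}_q$ be nonzero, $n\geqslant 2$, and let $\mathcal{I}_n$ be the ideal of $\mathbb{F}_q[x_1,\dots,x_n]$ generated by $\mathcal{B}_n$. Then the set of common zeros of $\mathcal{I}_n$ in $\mathbb{F}_q^n$ is exactly $\mathcal{V}_n=\{v_0,v_1,\dots,v_n\}$, where $v_0=(0,\dots,0)$ and $v_k=\left(\binom{k}{1}a,\binom{k}{2}a^2,\dots,\binom{k}{k}a^k,0,\dots,0\right)\in\mathbb{F}_q^n$ for $1\leqslant k\leqslant n$. (These are precisely the values $(\xi_1(X),\dots,\xi_n(X))$ for $X$ ranging over $\{X\in\mathrm{M}(n,q):X^2=aX\}$, where $\det(\lambda I_n-X)=\lambda^n+\sum_{i=1}^n(-1)^i\xi_i(X)\lambda^{n-i}$.)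
   Context: $\mathbb{F}_q$ is the finite field with $q$ elements, and $\mathbb{F}_q[x_1,\dots,x_{n-1}]\subseteq\mathbb{F}_q[x_1,\dots,x_n]$. Define $\mathcal{B}_2=\{x_2^2-a^2x_2,\ x_2x_1-2ax_2,\ x_1^2-ax_1-2x_2\}\subseteq\mathbb{F}_q[x_1,x_2]$, and recursively for $n\geqslant 3$ $$\mathcal{B}_n=\left\{f-\frac{f(w_n)}{a^n}x_n : f\in\mathcal{B}_{n-1}\right\}\cup\left\{x_nx_i-\binom{n}{i}a^ix_n : i=1,\dots,n\right\},$$ where $w_n=\left(\binom{n}{1}a,\binom{n}{2}a^2,\dots,\binom{n}{n-1}a^{n-1}\right)\in\mathbb{F}_q^{n-1}$ and $f(w_n)$ denotes evaluation of $f\in\mathbb{F}_q[x_1,\dots,x_{n-1}]$ at $w_n$. *)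

theory Defs
  imports Main
begin

text \<open>Points of F^n are functions nat => 'a, coordinates 1..n, all other coordinates 0.
  Polynomials in x_1..x_n are represented by their polynomial functions on such points.\<close>

type_synonym 'a pt = "nat \<Rightarrow> 'a"
type_synonym 'a pfun = "'a pt \<Rightarrow> 'a"

definition in_space :: "nat \<Rightarrow> 'a::zero pt \<Rightarrow> bool" where
  "in_space n x \<longleftrightarrow> (\<forall>i. (i = 0 \<or> n < i) \<longrightarrow> x i = 0)"

inductive_set polyfun :: "nat \<Rightarrow> ('a::comm_ring_1) pfun set" for n where
  const: "(\<lambda>x. c) \<in> polyfun n"
| var: "1 \<le> i \<Longrightarrow> i \<le> n \<Longrightarrow> (\<lambda>x. x i) \<in> polyfun n"
| add: "f \<in> polyfun n \<Longrightarrow> g \<in> polyfun n \<Longrightarrow> (\<lambda>x. f x + g x) \<in> polyfun n"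
| mult: "f \<in> polyfun n \<Longrightarrow> g \<in> polyfun n \<Longrightarrow> (\<lambda>x. f x * g x) \<in> polyfun n"

definition ideal_gen :: "nat \<Rightarrow> ('a::comm_ring_1) pfun list \<Rightarrow> 'a pfun set" where
  "ideal_gen n B = {f. \<exists>gs. length gs = length B \<and> set gs \<subseteq> polyfun n \<and>
       f = (\<lambda>x. \<Sum>i<length B. (gs ! i) x * (B ! i) x)}"

definition zero_set :: "nat \<Rightarrow> ('a::comm_ring_1) pfun set \<Rightarrow> 'a pt set" where
  "zero_set n I = {x. in_space n x \<and> (\<forall>f\<in>I. f x = 0)}"

definition wpt :: "'a::comm_ring_1 \<Rightarrow> nat \<Rightarrow> 'a pt" where
  "wpt a n = (\<lambda>i. if 1 \<le> i \<and> i \<le> n - 1 then of_nat (n choose i) * a ^ i else 0)"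

definition vpt :: "'a::comm_ring_1 \<Rightarrow> nat \<Rightarrow> 'a pt" where
  "vpt a k = (\<lambda>i. if 1 \<le> i \<and> i \<le> k then of_nat (k choose i) * a ^ i else 0)"

fun Bgen :: "'a::field \<Rightarrow> nat \<Rightarrow> 'a pfun list" where
  "Bgen a 0 = []"
| "Bgen a (Suc 0) = []"
| "Bgen a (Suc (Suc 0)) =
     [(\<lambda>x. x 2 ^ 2 - a ^ 2 * x 2),
      (\<lambda>x. x 2 * x 1 - 2 * a * x 2),
      (\<lambda>x. x 1 ^ 2 - a * x 1 - 2 * x 2)]"
| "Bgen a (Suc (Suc (Suc m))) =
     (let n = m + 3 in
       map (\<lambda>f. (\<lambda>x. f x - f (wpt a n) / a ^ n * x n)) (Bgen a (n - 1))
       @ map (\<lambda>i. (\<lambda>x. x n * x i - of_nat (n choose i) * a ^ i * x n)) [1..<n+1])"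

end

theory Submission
  imports Defs
begin

text \<open>A common zero x of B_n either has x_n = 0, and then the generators of
  B_n at x reduce to those of B_(n-1), or x_n \<noteq> 0, and then the generators
  x_n x_i - C(n,i) a^i x_n force x_i = C(n,i) a^i for all i, i.e. x = v_n. Conversely v_n agrees
  with w_n on the first n - 1 coordinates, so the corrected generators f - f(w_n)/a^n x_n vanish
  at v_n because its last coordinate is a^n.\<close>

lemma zero_set_ideal_gen:
  fixes B :: "('a::comm_ring_1) pfun list"
  shows "zero_set n (ideal_gen n B) = {x. in_space n x \<and> (\<forall>f\<in>set B. f x = 0)}"
proof (intro set_eqI iffI)
  fix x assume x: "x \<in> zero_set n (ideal_gen n B)"
  have "f x = 0" if "f \<in> set B" for f
  proof -
    obtain j where j: "j < length B" "f = B ! j"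
      using \<open>f \<in> set B\<close> by (auto simp: in_set_conv_nth)
    define gs where "gs = map (\<lambda>i (_::'a pt). if i = j then 1 else 0::'a) [0..<length B]"
    have "set gs \<subseteq> polyfun n" "length gs = length B"
      by (auto simp: gs_def intro: polyfun.const)
    then have "(\<lambda>x. \<Sum>i<length B. (gs ! i) x * (B ! i) x) \<in> ideal_gen n B"
      unfolding ideal_gen_def by blast
    with x have "(\<Sum>i<length B. (gs ! i) x * (B ! i) x) = 0"
      unfolding zero_set_def by auto
    moreover have "(\<Sum>i<length B. (gs ! i) x * (B ! i) x) =
        (\<Sum>i<length B. if i = j then (B ! i) x else 0)"
      by (rule sum.cong) (auto simp: gs_def)
    then have "(\<Sum>i<length B. (gs ! i) x * (B ! i) x) = (B ! j) x"
      using j(1) by simp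
    ultimately show "f x = 0" using j(2) by simp
  qed
  with x show "x \<in> {x. in_space n x \<and> (\<forall>f\<in>set B. f x = 0)}"
    unfolding zero_set_def by auto
next
  fix x assume "x \<in> {x. in_space n x \<and> (\<forall>f\<in>set B. f x = 0)}"
  then show "x \<in> zero_set n (ideal_gen n B)"
    unfolding zero_set_def ideal_gen_def
    by (auto intro!: sum.neutral dest!: bspec[OF _ nth_mem])
qed

lemma in_space_eqI:
  assumes "in_space n x" "in_space n y" "\<And>i. 1 \<le> i \<Longrightarrow> i \<le> n \<Longrightarrow> x i = y i"
  shows "x = y"
proof
  fix i show "x i = y i"
    using assms unfolding in_space_def by (cases "i = 0 \<or> n < i") auto
qed

lemma in_space_vpt: "k \<le> n \<Longrightarrow> in_space n (vpt a k)"
  by (auto simp: in_space_def vpt_def)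

lemma vpt_eq_0_above: "k < i \<Longrightarrow> vpt a k i = 0"
  by (simp add: vpt_def)

lemma vpt_self: "0 < k \<Longrightarrow> vpt a k k = a ^ k"
  by (simp add: vpt_def)

lemma set_Bgen_step:
  assumes "3 \<le> n"
  shows "set (Bgen a n) =
    (\<lambda>f x. f x - f (wpt a n) / a ^ n * x n) ` set (Bgen a (n - 1)) \<union>
    (\<lambda>i x. x n * x i - of_nat (n choose i) * a ^ i * x n) ` {1..n}"
proof -
  obtain m where "m + 3 = n"
    using le_Suc_ex[OF assms] by (auto simp: add.commute)
  then have n: "Suc (Suc (Suc m)) = n" "m + 3 = n" by simp_all
  have "Bgen a n = map (\<lambda>f x. f x - f (wpt a n) / a ^ n * x n) (Bgen a (n - 1)) @
      map (\<lambda>i x. x n * x i - of_nat (n choose i) * a ^ i * x n) [1..<n + 1]"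
    using Bgen.simps(4)[of a m] unfolding Let_def n .
  then show ?thesis
    by (simp only: set_append set_map set_upt Suc_eq_plus1[symmetric] atLeastLessThanSuc_atLeastAtMost)
qed

lemma Bgen_cong:
  "f \<in> set (Bgen a n) \<Longrightarrow> (\<And>i. 1 \<le> i \<Longrightarrow> i \<le> n \<Longrightarrow> x i = y i) \<Longrightarrow> f x = f y"
proof (induction a n arbitrary: f rule: Bgen.induct)
  case (3 a)
  then have "x 1 = y 1" "x 2 = y 2" by auto
  with 3(1) show ?case by auto
next
  case (4 a m)
  let ?n = "Suc (Suc (Suc m))"
  have IH: "g x = g y" if "g \<in> set (Bgen a (?n - 1))" for g
    using 4(1)[of ?n g] that 4(3) by simp
  have "3 \<le> ?n" by simp
  show ?case
    using 4(2) IH 4(3) unfolding set_Bgen_step[OF \<open>3 \<le> ?n\<close>] by auto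
qed simp_all

lemma Bgen_2_common_zeros:
  fixes a :: "'a::field"
  assumes "a \<noteq> 0" and x: "in_space 2 x"
  shows "(\<forall>f\<in>set (Bgen a 2). f x = 0) \<longleftrightarrow> (\<exists>k\<le>2. x = vpt a k)"
proof -
  have B2: "set (Bgen a 2) = {\<lambda>x. x 2 ^ 2 - a ^ 2 * x 2, \<lambda>x. x 2 * x 1 - 2 * a * x 2,
      \<lambda>x. x 1 ^ 2 - a * x 1 - 2 * x 2}"
    by (simp add: numeral_2_eq_2)
  have vpt_eq: "x = vpt a k \<longleftrightarrow> x 1 = vpt a k 1 \<and> x 2 = vpt a k 2" if "k \<le> 2" for k
    using in_space_eqI[OF x in_space_vpt[OF that]] by (auto simp: le_Suc_eq numeral_2_eq_2)
  have upto_2: "(\<exists>k\<le>2. P k) \<longleftrightarrow> P 0 \<or> P 1 \<or> P (2::nat)" for P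
    by (auto simp: le_Suc_eq numeral_2_eq_2)
  have v: "vpt a 0 1 = 0" "vpt a 0 2 = 0" "vpt a 1 1 = a" "vpt a 1 2 = 0"
    "vpt a 2 1 = 2 * a" "vpt a 2 2 = a ^ 2"
    by (simp_all add: vpt_def)
  show ?thesis
  proof
    assume "\<forall>f\<in>set (Bgen a 2). f x = 0"
    then have e1: "x 2 * (x 2 - a ^ 2) = 0" and e2: "x 2 * (x 1 - 2 * a) = 0"
      and e3: "x 1 * (x 1 - a) = 2 * x 2"
      by (auto simp: B2 algebra_simps power2_eq_square)
    from e1 consider "x 2 = 0" | "x 2 = a ^ 2" by auto
    then show "\<exists>k\<le>2. x = vpt a k"
    proof cases
      case 1
      with e3 have "x 1 = 0 \<or> x 1 = a" by auto
      with 1 show ?thesis unfolding upto_2 by (auto simp: vpt_eq v[unfolded One_nat_def])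
    next
      case 2
      with e2 \<open>a \<noteq> 0\<close> have "x 1 = 2 * a" by simp
      with 2 show ?thesis unfolding upto_2 by (simp add: vpt_eq v[unfolded One_nat_def])
    qed
  next
    assume "\<exists>k\<le>2. x = vpt a k"
    then show "\<forall>f\<in>set (Bgen a 2). f x = 0"
      unfolding upto_2 by (auto simp: B2 v[unfolded One_nat_def] power2_eq_square algebra_simps)
  qed
qed

lemma Bgen_common_zeros_step_iff:
  assumes "3 \<le> n"
  shows "(\<forall>f\<in>set (Bgen a n). f x = 0) \<longleftrightarrow>
    (\<forall>f\<in>set (Bgen a (n - 1)). f x = f (wpt a n) / a ^ n * x n) \<and>
    (\<forall>i\<in>{1..n}. x n * x i = of_nat (n choose i) * a ^ i * x n)"
  unfolding set_Bgen_step[OF assms] by (simp add: ball_Un)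

lemma Bgen_common_zeros_if_last_coord_zero:
  assumes "3 \<le> n" "x n = 0"
  shows "(\<forall>f\<in>set (Bgen a n). f x = 0) \<longleftrightarrow> (\<forall>f\<in>set (Bgen a (n - 1)). f x = 0)"
  using assms by (simp add: Bgen_common_zeros_step_iff)

lemma Bgen_common_zeros_if_last_coord_nonzero:
  fixes a :: "'a::field"
  assumes "3 \<le> n" "a \<noteq> 0" "in_space n x" "x n \<noteq> 0"
  shows "(\<forall>f\<in>set (Bgen a n). f x = 0) \<longleftrightarrow> x = vpt a n"
proof
  assume "\<forall>f\<in>set (Bgen a n). f x = 0"
  then have coord: "x n * x i = of_nat (n choose i) * a ^ i * x n" if "1 \<le> i" "i \<le> n" for i
    using that by (auto simp: Bgen_common_zeros_step_iff[OF \<open>3 \<le> n\<close>])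
  show "x = vpt a n"
  proof (rule in_space_eqI[OF \<open>in_space n x\<close> in_space_vpt[OF order_refl]])
    fix i assume "1 \<le> i" "i \<le> n"
    with coord[OF this] \<open>x n \<noteq> 0\<close> show "x i = vpt a n i"
      by (simp add: vpt_def mult.commute)
  qed
next
  assume x: "x = vpt a n"
  then have xn: "x n = a ^ n" using \<open>3 \<le> n\<close> by (simp add: vpt_self)
  have "f x = f (wpt a n)" if "f \<in> set (Bgen a (n - 1))" for f
    by (rule Bgen_cong[OF that]) (auto simp: x vpt_def wpt_def)
  with xn \<open>a \<noteq> 0\<close> show "\<forall>f\<in>set (Bgen a n). f x = 0"
    unfolding Bgen_common_zeros_step_iff[OF \<open>3 \<le> n\<close>] by (simp add: x vpt_def)
qed

lemma Bgen_common_zeros: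
  fixes a :: "'a::field"
  assumes "a \<noteq> 0" "2 \<le> n" "in_space n x"
  shows "(\<forall>f\<in>set (Bgen a n). f x = 0) \<longleftrightarrow> (\<exists>k\<le>n. x = vpt a k)"
  using assms(2,3)
proof (induction n arbitrary: x rule: nat_induct_at_least)
  case base
  then show ?case using Bgen_2_common_zeros[OF \<open>a \<noteq> 0\<close>] by blast
next
  case (Suc n)
  show ?case
  proof (cases "x (Suc n) = 0")
    case True
    with Suc.prems have "in_space n x" unfolding in_space_def by (metis Suc_lessI)
    have "(\<forall>f\<in>set (Bgen a (Suc n)). f x = 0) \<longleftrightarrow> (\<forall>f\<in>set (Bgen a n). f x = 0)"
      using Bgen_common_zeros_if_last_coord_zero[of "Suc n" x a] Suc.hyps True by simp
    also have "\<dots> \<longleftrightarrow> (\<exists>k\<le>n. x = vpt a k)"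
      by (rule Suc.IH[OF \<open>in_space n x\<close>])
    also have "\<dots> \<longleftrightarrow> (\<exists>k\<le>Suc n. x = vpt a k)"
      using True vpt_self[of "Suc n" a] \<open>a \<noteq> 0\<close> by (auto simp: le_Suc_eq)
    finally show ?thesis .
  next
    case False
    have "(\<forall>f\<in>set (Bgen a (Suc n)). f x = 0) \<longleftrightarrow> x = vpt a (Suc n)"
      using Bgen_common_zeros_if_last_coord_nonzero[of "Suc n" a x] Suc False \<open>a \<noteq> 0\<close> by simp
    also have "\<dots> \<longleftrightarrow> (\<exists>k\<le>Suc n. x = vpt a k)"
      using False vpt_eq_0_above[of _ "Suc n" a] by (auto simp: le_less)
    finally show ?thesis .
  qed
qed

theorem theorem4p7:
  fixes a :: "'a::{finite,field}" and n :: nat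
  assumes "a \<noteq> 0" and "2 \<le> n"
  shows "zero_set n (ideal_gen n (Bgen a n)) = {vpt a k | k. k \<le> n}"
  unfolding zero_set_ideal_gen
proof (intro set_eqI iffI)
  fix x assume "x \<in> {x. in_space n x \<and> (\<forall>f\<in>set (Bgen a n). f x = 0)}"
  then show "x \<in> {vpt a k | k. k \<le> n}"
    using Bgen_common_zeros[OF assms] by auto
next
  fix x assume "x \<in> {vpt a k | k. k \<le> n}"
  then obtain k where "k \<le> n" "x = vpt a k" by blast
  with in_space_vpt show "x \<in> {x. in_space n x \<and> (\<forall>f\<in>set (Bgen a n). f x = 0)}"
    using Bgen_common_zeros[OF assms] by blast
qed

end
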